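(* Let $h,g_1,g_2>0$ and $f\in(0,1)$. For $\Delta>0$ define (logarithms base $2$) \begin{align*} I_{hd,1}(\Delta)&=f\log\Big(1+\frac{h^2}{1+\Delta}+g_2^2\Big)+(1-f)\log(1+g_2^2),\\ I_{hd,2}(\Delta)&=(1-f)\log(1+g_1^2+g_2^2)+f\Big\{\log(1+g_2^2)-\log\frac{1+\Delta}{\Delta}\Big\}. \end{align*} Then there is a unique $\Delta>0$ with $I_{hd,1}(\Delta)=I_{hd,2}(\Delta)$, and this $\Delta=\Delta^*(f)$ maximizes $[\min\{I_{hd,1}(\Delta),I_{hd,2}(\Delta)\}]^+$ over $\Delta>0$, where $[x]^+=\max\{x,0\}$.
   Context: $[\min\{I_{hd,1},I_{hd,2}\}]^+$ is the quantize-map-and-forward rate of the half-duplex Gaussian single-relay channel in which the relay listens for a fraction $f$ of the block and transmits for the remaining fraction $1-f$, using a Gaussian vector quantizer of distortion $\Delta$; $h,g_1,g_2$ are the source-relay, relay-destination and source-destination channel magnitudes, all known to the relay. *)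

theory Defs
  imports Complex_Main
begin

definition I_hd1 :: "real \<Rightarrow> real \<Rightarrow> real \<Rightarrow> real \<Rightarrow> real \<Rightarrow> real" where
  "I_hd1 h g1 g2 f \<Delta> =
     f * log 2 (1 + h^2 / (1 + \<Delta>) + g2^2) + (1 - f) * log 2 (1 + g2^2)"

definition I_hd2 :: "real \<Rightarrow> real \<Rightarrow> real \<Rightarrow> real \<Rightarrow> real \<Rightarrow> real" where
  "I_hd2 h g1 g2 f \<Delta> =
     (1 - f) * log 2 (1 + g1^2 + g2^2) + f * (log 2 (1 + g2^2) - log 2 ((1 + \<Delta>) / \<Delta>))"

definition pos_part :: "real \<Rightarrow> real" where
  "pos_part x = max x 0"

definition qmf_rate :: "real \<Rightarrow> real \<Rightarrow> real \<Rightarrow> real \<Rightarrow> real \<Rightarrow> real" where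
  "qmf_rate h g1 g2 f \<Delta> = pos_part (min (I_hd1 h g1 g2 f \<Delta>) (I_hd2 h g1 g2 f \<Delta>))"

end

theory Submission
  imports Defs
begin

text \<open>On \<open>\<Delta> > 0\<close> the rate \<open>I_hd1\<close> strictly decreases and \<open>I_hd2\<close> strictly increases
  in \<open>\<Delta>\<close>, so their difference is strictly decreasing: it has at most one zero, and it has one
  because it is positive for small \<open>\<Delta>\<close> (through the term \<open>log ((1 + \<Delta>) / \<Delta>)\<close>) and tends to
  \<open>(1 - f) (log (1 + g\<^sub>2\<^sup>2) - log (1 + g\<^sub>1\<^sup>2 + g\<^sub>2\<^sup>2)) < 0\<close> as \<open>\<Delta> \<rightarrow> \<infinity>\<close>.
  The minimum of a decreasing and an increasing function is maximal where the two cross.\<close>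

lemma crossing_unique:
  fixes f g :: "'a::linorder \<Rightarrow> 'b::linorder"
  assumes "strict_antimono_on S f" "strict_mono_on S g"
    and "x \<in> S" "y \<in> S" "f x = g x" "f y = g y"
  shows "x = y"
proof (rule ccontr)
  assume "x \<noteq> y"
  then consider "x < y" | "y < x" by fastforce
  then show False
  proof cases
    case 1
    have "f y < f x" "g x < g y" using 1 assms by (auto dest: monotone_onD)
    then show False using assms by simp
  next
    case 2
    have "f x < f y" "g y < g x" using 2 assms by (auto dest: monotone_onD)
    then show False using assms by simp
  qed
qed

lemma min_le_min_at_crossing:
  fixes f g :: "'a::linorder \<Rightarrow> 'b::linorder"
  assumes "antimono_on S f" "mono_on S g"
    and "d \<in> S" "x \<in> S" "f d = g d"
  shows "min (f x) (g x) \<le> min (f d) (g d)"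
proof (cases "x \<le> d")
  case True
  then have "g x \<le> g d" using assms by (auto dest: monotone_onD)
  then show ?thesis using assms by (simp add: min.coboundedI2)
next
  case False
  then have "f x \<le> f d" using assms by (auto dest: monotone_onD)
  then show ?thesis using assms by (simp add: min.coboundedI1)
qed

lemma I_hd1_strict_antimono:
  assumes "h > 0" "f > 0"
  shows "strict_antimono_on {0<..} (I_hd1 h g1 g2 f)"
proof (rule monotone_onI)
  fix x y :: real
  assume "x \<in> {0<..}" "y \<in> {0<..}" "x < y"
  then have "h\<^sup>2 / (1 + y) < h\<^sup>2 / (1 + x)"
    using assms by (intro divide_strict_left_mono) auto
  moreover have "0 < 1 + h\<^sup>2 / (1 + y) + g2\<^sup>2"
    using \<open>y \<in> {0<..}\<close> by (simp add: add_pos_nonneg)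
  ultimately have "log 2 (1 + h\<^sup>2 / (1 + y) + g2\<^sup>2) < log 2 (1 + h\<^sup>2 / (1 + x) + g2\<^sup>2)"
    by simp
  then show "I_hd1 h g1 g2 f y < I_hd1 h g1 g2 f x"
    using assms unfolding I_hd1_def by simp
qed

lemma I_hd2_strict_mono:
  assumes "f > 0"
  shows "strict_mono_on {0<..} (I_hd2 h g1 g2 f)"
proof (rule monotone_onI)
  fix x y :: real
  assume "x \<in> {0<..}" "y \<in> {0<..}" "x < y"
  then have "(1 + y) / y < (1 + x) / x" "0 < (1 + y) / y"
    by (auto simp: field_simps)
  then have "log 2 ((1 + y) / y) < log 2 ((1 + x) / x)"
    by simp
  then show "I_hd2 h g1 g2 f x < I_hd2 h g1 g2 f y"
    using assms unfolding I_hd2_def by simp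
qed

lemma continuous_on_I_hd1: "continuous_on {0<..} (I_hd1 h g1 g2 f)"
proof -
  have pos: "0 < 1 + h\<^sup>2 / (1 + x) + g2\<^sup>2" if "0 < x" for x :: real
    using that by (simp add: add_pos_nonneg)
  show ?thesis
    unfolding I_hd1_def by (intro continuous_intros) (auto simp: pos less_imp_neq[OF pos, symmetric])
qed

lemma continuous_on_I_hd2: "continuous_on {0<..} (I_hd2 h g1 g2 f)"
  unfolding I_hd2_def by (intro continuous_intros) (auto simp: add_pos_nonneg)

lemma I_hd1_minus_I_hd2_tendsto_at_top:
  "((\<lambda>\<Delta>. I_hd1 h g1 g2 f \<Delta> - I_hd2 h g1 g2 f \<Delta>) \<longlongrightarrow>
     (1 - f) * (log 2 (1 + g2\<^sup>2) - log 2 (1 + g1\<^sup>2 + g2\<^sup>2))) at_top"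
proof -
  have to_0: "((\<lambda>x::real. h\<^sup>2 / (1 + x)) \<longlongrightarrow> 0) at_top"
    by (intro tendsto_divide_0[OF tendsto_const] filterlim_at_top_imp_at_infinity
        filterlim_tendsto_add_at_top[OF tendsto_const filterlim_ident])
  have "((\<lambda>x::real. 1 / x + 1) \<longlongrightarrow> 0 + 1) at_top"
    by (intro tendsto_intros tendsto_divide_0[OF tendsto_const]
        filterlim_at_top_imp_at_infinity filterlim_ident)
  moreover have "eventually (\<lambda>x::real. 1 / x + 1 = (1 + x) / x) at_top"
    using eventually_gt_at_top[of 0] by eventually_elim (simp add: field_simps)
  ultimately have to_1: "((\<lambda>x::real. (1 + x) / x) \<longlongrightarrow> 1) at_top"
    by (simp add: tendsto_cong)
  have "0 < 1 + 0 + g2\<^sup>2" by (simp add: add_pos_nonneg)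
  then have "((\<lambda>\<Delta>. I_hd1 h g1 g2 f \<Delta> - I_hd2 h g1 g2 f \<Delta>) \<longlongrightarrow>
     (f * log 2 (1 + 0 + g2\<^sup>2) + (1 - f) * log 2 (1 + g2\<^sup>2)) -
     ((1 - f) * log 2 (1 + g1\<^sup>2 + g2\<^sup>2) + f * (log 2 (1 + g2\<^sup>2) - log 2 1))) at_top"
    unfolding I_hd1_def I_hd2_def by (intro tendsto_intros to_0 to_1) auto
  then show ?thesis by (simp add: algebra_simps)
qed

lemma I_hd1_gt_I_hd2_near_zero:
  assumes "h > 0" "g1 > 0" "0 < f" "f < 1"
  obtains \<Delta> where "\<Delta> > 0" "I_hd1 h g1 g2 f \<Delta> > I_hd2 h g1 g2 f \<Delta>"
proof -
  define c where "c = (1 - f) * (log 2 (1 + g1\<^sup>2 + g2\<^sup>2) - log 2 (1 + g2\<^sup>2))"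
  have "log 2 (1 + g2\<^sup>2) < log 2 (1 + g1\<^sup>2 + g2\<^sup>2)"
    using assms by (simp add: add_pos_nonneg)
  then have "c > 0" unfolding c_def using assms by simp
  define \<Delta> where "\<Delta> = 1 / (2 powr (c / f) - 1)"
  text \<open>This \<open>\<Delta>\<close> solves \<open>f log ((1 + \<Delta>) / \<Delta>) = c\<close>, which cancels the \<open>g\<^sub>1\<close>-dependent part
    of \<open>I_hd2\<close> and leaves \<open>I_hd1 - I_hd2 = f (log (1 + h\<^sup>2 / (1 + \<Delta>) + g\<^sub>2\<^sup>2) - log (1 + g\<^sub>2\<^sup>2))\<close>.\<close>
  have "2 powr (c / f) > 1" using \<open>c > 0\<close> assms by simp
  then have "\<Delta> > 0" "(1 + \<Delta>) / \<Delta> = 2 powr (c / f)"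
    unfolding \<Delta>_def using \<open>c > 0\<close> assms by (simp_all add: field_simps)
  then have log_eq: "f * log 2 ((1 + \<Delta>) / \<Delta>) = c"
    using assms by simp
  then have "I_hd1 h g1 g2 f \<Delta> - I_hd2 h g1 g2 f \<Delta>
      = f * (log 2 (1 + h\<^sup>2 / (1 + \<Delta>) + g2\<^sup>2) - log 2 (1 + g2\<^sup>2))"
    unfolding I_hd1_def I_hd2_def c_def by (simp add: algebra_simps)
  moreover have "log 2 (1 + g2\<^sup>2) < log 2 (1 + h\<^sup>2 / (1 + \<Delta>) + g2\<^sup>2)"
    using assms \<open>\<Delta> > 0\<close> by (simp add: add_pos_nonneg)
  ultimately have "I_hd1 h g1 g2 f \<Delta> - I_hd2 h g1 g2 f \<Delta> > 0"
    using \<open>f > 0\<close> by simp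
  then have "I_hd1 h g1 g2 f \<Delta> > I_hd2 h g1 g2 f \<Delta>"
    by simp
  with \<open>\<Delta> > 0\<close> show ?thesis by (rule that)
qed

lemma I_hd_crossing_exists:
  assumes "h > 0" "g1 > 0" "0 < f" "f < 1"
  shows "\<exists>\<Delta>>0. I_hd1 h g1 g2 f \<Delta> = I_hd2 h g1 g2 f \<Delta>"
proof -
  define D where "D \<Delta> = I_hd1 h g1 g2 f \<Delta> - I_hd2 h g1 g2 f \<Delta>" for \<Delta>
  obtain x0 where "x0 > 0" "D x0 > 0"
    using I_hd1_gt_I_hd2_near_zero[OF assms] unfolding D_def by auto
  have "log 2 (1 + g2\<^sup>2) < log 2 (1 + g1\<^sup>2 + g2\<^sup>2)"
    using assms by (simp add: add_pos_nonneg)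
  then have "(1 - f) * (log 2 (1 + g2\<^sup>2) - log 2 (1 + g1\<^sup>2 + g2\<^sup>2)) < 0"
    using assms by (simp add: mult_pos_neg)
  then have "eventually (\<lambda>\<Delta>. D \<Delta> < 0) at_top"
    using order_tendstoD(2)[OF I_hd1_minus_I_hd2_tendsto_at_top] unfolding D_def by blast
  then have "eventually (\<lambda>\<Delta>. x0 < \<Delta> \<and> D \<Delta> < 0) at_top"
    using eventually_gt_at_top[of x0] by (simp add: eventually_conj)
  then obtain x1 where "x1 > x0" "D x1 < 0"
    unfolding eventually_at_top_linorder by auto
  have "continuous_on {x0..x1} D"
    unfolding D_def using \<open>x0 > 0\<close>
    by (intro continuous_intros continuous_on_subset[OF continuous_on_I_hd1]
        continuous_on_subset[OF continuous_on_I_hd2]) auto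
  then obtain \<Delta> where "x0 \<le> \<Delta>" "D \<Delta> = 0"
    using IVT2'[of D x1 0 x0] \<open>x1 > x0\<close> \<open>D x0 > 0\<close> \<open>D x1 < 0\<close> by fastforce
  moreover have "\<Delta> > 0" using \<open>x0 > 0\<close> \<open>x0 \<le> \<Delta>\<close> by linarith
  ultimately show ?thesis unfolding D_def by auto
qed

theorem mainTheorem12:
  fixes h g1 g2 f :: real
  assumes "h > 0" and "g1 > 0" and "g2 > 0" and "0 < f" and "f < 1"
  shows "(\<exists>!\<Delta>. \<Delta> > 0 \<and> I_hd1 h g1 g2 f \<Delta> = I_hd2 h g1 g2 f \<Delta>) \<and>
         (\<forall>\<Delta>. \<Delta> > 0 \<and> I_hd1 h g1 g2 f \<Delta> = I_hd2 h g1 g2 f \<Delta> \<longrightarrow>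
           (\<forall>\<Delta>'. \<Delta>' > 0 \<longrightarrow> qmf_rate h g1 g2 f \<Delta>' \<le> qmf_rate h g1 g2 f \<Delta>))"
proof -
  have dec: "strict_antimono_on {0<..} (I_hd1 h g1 g2 f)"
    by (simp add: I_hd1_strict_antimono assms)
  have inc: "strict_mono_on {0<..} (I_hd2 h g1 g2 f)"
    by (simp add: I_hd2_strict_mono assms)
  have "\<exists>!\<Delta>. \<Delta> > 0 \<and> I_hd1 h g1 g2 f \<Delta> = I_hd2 h g1 g2 f \<Delta>"
    using I_hd_crossing_exists[of h g1 f g2] crossing_unique[OF dec inc] assms by auto
  moreover have "qmf_rate h g1 g2 f \<Delta>' \<le> qmf_rate h g1 g2 f \<Delta>"
    if "\<Delta> > 0" "I_hd1 h g1 g2 f \<Delta> = I_hd2 h g1 g2 f \<Delta>" "\<Delta>' > 0" for \<Delta> \<Delta>'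
  proof -
    have "antimono_on {0<..} (I_hd1 h g1 g2 f)"
      using dec by (simp add: strict_antimono_iff_antimono)
    from min_le_min_at_crossing[OF this strict_mono_on_imp_mono_on[OF inc], of \<Delta> \<Delta>'] that
    have "min (I_hd1 h g1 g2 f \<Delta>') (I_hd2 h g1 g2 f \<Delta>')
             \<le> min (I_hd1 h g1 g2 f \<Delta>) (I_hd2 h g1 g2 f \<Delta>)"
      by simp
    then show ?thesis unfolding qmf_rate_def pos_part_def by (rule max.mono) simp
  qed
  ultimately show ?thesis by blast
qed

end
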